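(* Let $E,F$ be Banach spaces, $a\in E$, $1\le p<\infty$, and $f:E\to F$. Suppose there exist $C,\delta,r>0$ such that \[ \Vert(f(a+x_{j})-f(a))_{j=1}^{k}\Vert_{w,1}\leq C\Vert(x_{j})_{j=1}^{k}\Vert_{w,p}^{r} \] for every $k\in\mathbb{N}$ and all $x_{1},\dots,x_{k}\in E$ with $\Vert(x_{j})_{j=1}^{k}\Vert_{w,p}<\delta$. Then $f$ is almost $p$-summing at $a$.
   Context: For a finite sequence $(y_j)_{j=1}^k$ in a Banach space $X$ and $1\le s<\infty$, $\Vert(y_{j})_{j=1}^k\Vert_{w,s}:=\sup_{\varphi\in B_{X'}}(\sum_{j=1}^k|\varphi(y_{j})|^{s})^{1/s}$. With $(r_j)$ the Rademacher functions, $f$ is almost $p$-summing at $a$ if there exist $C_a,\epsilon_a,r_a>0$ with $(\int_{0}^{1}\Vert\sum_{j=1}^{k}(f(a+x_{j})-f(a))r_{j}(t)\Vert^{2}dt)^{1/2}\leq C_{a}\Vert(x_{j})_{j=1}^{k}\Vert_{w,p}^{r_{a}}$ for all $k$ and $x_1,\dots,x_k\in E$ with $\Vert(x_{j})_{j=1}^{k}\Vert_{w,p}<\epsilon_{a}$. *)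

theory Defs
  imports "HOL-Analysis.Analysis"
begin

definition rademacher :: "nat \<Rightarrow> real \<Rightarrow> real" where
  "rademacher n t = sgn (sin (2 ^ n * pi * t))"

definition weak_norm :: "real \<Rightarrow> nat \<Rightarrow> (nat \<Rightarrow> 'a::real_normed_vector) \<Rightarrow> real" where
  "weak_norm s k y =
     (SUP \<phi> \<in> {\<phi> :: 'a \<Rightarrow> real. bounded_linear \<phi> \<and> onorm \<phi> \<le> 1}.
        (\<Sum>j = 1..k. \<bar>\<phi> (y j)\<bar> powr s) powr (1 / s))"

definition almost_p_summing_at ::
  "real \<Rightarrow> ('a::real_normed_vector \<Rightarrow> 'b::real_normed_vector) \<Rightarrow> 'a \<Rightarrow> bool" where
  "almost_p_summing_at p f a \<longleftrightarrow>
     (\<exists>C \<epsilon> r. C > 0 \<and> \<epsilon> > 0 \<and> r > 0 \<and>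
        (\<forall>k (x :: nat \<Rightarrow> 'a). weak_norm p k x < \<epsilon> \<longrightarrow>
           sqrt (integral {0..1}
                   (\<lambda>t. (norm (\<Sum>j = 1..k. rademacher j t *\<^sub>R (f (a + x j) - f a)))\<^sup>2))
             \<le> C * weak_norm p k x powr r))"

end

theory Submission
  imports Defs
begin

text \<open>For coefficients \<open>\<bar>c\<^sub>j\<bar> \<le> 1\<close>, a norm-one functional \<open>\<phi>\<close> norming \<open>v = \<Sum>\<^sub>j c\<^sub>j y\<^sub>j\<close> gives
  \<open>\<parallel>v\<parallel> = \<Sum>\<^sub>j c\<^sub>j \<phi>(y\<^sub>j) \<le> \<Sum>\<^sub>j \<bar>\<phi>(y\<^sub>j)\<bar> \<le> \<parallel>(y\<^sub>j)\<parallel>\<^sub>w\<^sub>,\<^sub>1\<close>. The Rademacher sums of the increments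
  \<open>y\<^sub>j = f(a + x\<^sub>j) - f(a)\<close> are therefore bounded pointwise, hence in \<open>L\<^sup>2\<close>, by their weak 1-norm,
  and the hypothesis bounds that by \<open>C \<parallel>(x\<^sub>j)\<parallel>\<^sub>w\<^sub>,\<^sub>p\<^sup>r\<close>.
  The norming functional comes from the Zorn-lemma proof of the Hahn--Banach theorem: a maximal
  norm-dominated partial functional through \<open>(y, \<parallel>y\<parallel>)\<close> is total, since one can always extend to
  one more dimension.\<close>

text \<open>Partial linear functionals are encoded by their graphs, so that chains are joined by union.\<close>
locale norm_dominated_linear_graph =
  fixes G :: "('a::real_normed_vector \<times> real) set"
  assumes graph_unique: "(x, a) \<in> G \<Longrightarrow> (x, b) \<in> G \<Longrightarrow> a = b"
    and graph_add: "(x, a) \<in> G \<Longrightarrow> (y, b) \<in> G \<Longrightarrow> (x + y, a + b) \<in> G"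
    and graph_scaleR: "(x, a) \<in> G \<Longrightarrow> (c *\<^sub>R x, c * a) \<in> G"
    and graph_le_norm: "(x, a) \<in> G \<Longrightarrow> a \<le> norm x"
begin

lemma graph_diff: "(x, a) \<in> G \<Longrightarrow> (y, b) \<in> G \<Longrightarrow> (x - y, a - b) \<in> G"
  using graph_add[of x a "(-1) *\<^sub>R y" "(-1) * b"] graph_scaleR[of y b "-1"] by simp

lemma zero_in_graph: "G \<noteq> {} \<Longrightarrow> (0, 0) \<in> G"
  using graph_scaleR[of _ _ 0] by auto

lemma extension_value_exists:
  "\<exists>c. \<forall>x a. (x, a) \<in> G \<longrightarrow> a - norm (x - z) \<le> c \<and> c \<le> norm (x + z) - a"
proof -
  define S where "S = {a - norm (x - z) | x a. (x, a) \<in> G}"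
  have separated: "b - norm (y - z) \<le> norm (x + z) - a" if "(x, a) \<in> G" "(y, b) \<in> G" for x a y b
  proof -
    have "a + b \<le> norm (x + y)"
      using graph_le_norm[OF graph_add[OF that]] .
    also have "\<dots> \<le> norm (x + z) + norm (y - z)"
      using norm_triangle_ineq[of "x + z" "y - z"] by (simp add: algebra_simps)
    finally show ?thesis by simp
  qed
  show ?thesis
  proof (cases "G = {}")
    case False
    then obtain x0 a0 where "(x0, a0) \<in> G" by auto
    then have "bdd_above S"
      unfolding S_def bdd_above_def using separated by blast
    moreover have "S \<noteq> {}"
      using False unfolding S_def by auto
    ultimately have "\<forall>x a. (x, a) \<in> G \<longrightarrow> a - norm (x - z) \<le> Sup S \<and> Sup S \<le> norm (x + z) - a"
      using separated by (auto intro!: cSup_upper cSup_least simp: S_def)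
    then show ?thesis by blast
  qed simp
qed

lemma extension_le_norm:
  assumes c: "\<forall>x a. (x, a) \<in> G \<longrightarrow> a - norm (x - z) \<le> c \<and> c \<le> norm (x + z) - a"
    and xa: "(x, a) \<in> G"
  shows "a + t * c \<le> norm (x + t *\<^sub>R z)"
proof (cases t "0::real" rule: linorder_cases)
  case less
  define s where "s = - t"
  have s: "s > 0" using less by (simp add: s_def)
  have "(1 / s) * a - norm ((1 / s) *\<^sub>R x - z) \<le> c"
    using c graph_scaleR[OF xa] by blast
  then have "s * ((1 / s) * a - norm ((1 / s) *\<^sub>R x - z)) \<le> s * c"
    using s by (simp add: mult_left_mono)
  moreover have "s * norm ((1 / s) *\<^sub>R x - z) = norm (x + t *\<^sub>R z)"
  proof -
    have "x + t *\<^sub>R z = s *\<^sub>R ((1 / s) *\<^sub>R x - z)"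
      using s by (simp add: s_def algebra_simps)
    then show ?thesis using s by simp
  qed
  ultimately show ?thesis
    using s by (simp add: s_def right_diff_distrib)
next
  case greater
  have "c \<le> norm ((1 / t) *\<^sub>R x + z) - (1 / t) * a"
    using c graph_scaleR[OF xa] by blast
  then have "t * c \<le> t * (norm ((1 / t) *\<^sub>R x + z) - (1 / t) * a)"
    using greater by (simp add: mult_left_mono)
  moreover have "t * norm ((1 / t) *\<^sub>R x + z) = norm (x + t *\<^sub>R z)"
  proof -
    have "x + t *\<^sub>R z = t *\<^sub>R ((1 / t) *\<^sub>R x + z)"
      using greater by (simp add: algebra_simps)
    then show ?thesis using greater by simp
  qed
  ultimately show ?thesis
    using greater by (simp add: right_diff_distrib)
qed (simp add: graph_le_norm xa)

lemma coefficient_unique_off_domain: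
  assumes z: "z \<notin> Domain G" and "(x, a) \<in> G" "(y, b) \<in> G"
    and eq: "x + s *\<^sub>R z = y + t *\<^sub>R z"
  shows "s = t"
proof (rule ccontr)
  assume "s \<noteq> t"
  have "(t - s) *\<^sub>R z = x - y"
    using eq by (simp add: algebra_simps)
  then have "z = (x - y) /\<^sub>R (t - s)"
    using \<open>s \<noteq> t\<close> by (simp add: divideR_right)
  then have "(z, inverse (t - s) * (a - b)) \<in> G"
    using graph_scaleR[OF graph_diff[OF assms(2,3)]] by simp
  then show False using z by blast
qed

lemma extend_one_dimension:
  assumes "G \<noteq> {}" and z: "z \<notin> Domain G"
  shows "\<exists>G'. norm_dominated_linear_graph G' \<and> G \<subseteq> G' \<and> z \<in> Domain G'"
proof -
  obtain c where c: "\<forall>x a. (x, a) \<in> G \<longrightarrow> a - norm (x - z) \<le> c \<and> c \<le> norm (x + z) - a"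
    using extension_value_exists by blast
  define G' where "G' = {(x + t *\<^sub>R z, a + t * c) | x a t. (x, a) \<in> G}"
  have "G \<subseteq> G'"
    unfolding G'_def by force
  moreover have "(z, c) \<in> G'"
    using zero_in_graph[OF \<open>G \<noteq> {}\<close>] unfolding G'_def by force
  moreover have "norm_dominated_linear_graph G'"
  proof
    fix v a b
    assume "(v, a) \<in> G'" "(v, b) \<in> G'"
    then obtain x a0 s y b0 t where h: "(x, a0) \<in> G" "(y, b0) \<in> G"
      "v = x + s *\<^sub>R z" "a = a0 + s * c" "v = y + t *\<^sub>R z" "b = b0 + t * c"
      unfolding G'_def by blast
    then have "s = t"
      using coefficient_unique_off_domain[OF z h(1,2)] by simp
    then show "a = b"
      using h graph_unique by auto
  next
    fix v a w b
    assume "(v, a) \<in> G'" "(w, b) \<in> G'"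
    then obtain x a0 s y b0 t where h: "(x, a0) \<in> G" "(y, b0) \<in> G"
      "v = x + s *\<^sub>R z" "a = a0 + s * c" "w = y + t *\<^sub>R z" "b = b0 + t * c"
      unfolding G'_def by blast
    have "v + w = (x + y) + (s + t) *\<^sub>R z" "a + b = (a0 + b0) + (s + t) * c"
      using h by (simp_all add: algebra_simps)
    then show "(v + w, a + b) \<in> G'"
      unfolding G'_def using graph_add[OF h(1,2)] by blast
  next
    fix v a r
    assume "(v, a) \<in> G'"
    then obtain x a0 t where h: "(x, a0) \<in> G" "v = x + t *\<^sub>R z" "a = a0 + t * c"
      unfolding G'_def by blast
    have "r *\<^sub>R v = r *\<^sub>R x + (r * t) *\<^sub>R z" "r * a = r * a0 + (r * t) * c"
      using h by (simp_all add: algebra_simps)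
    then show "(r *\<^sub>R v, r * a) \<in> G'"
      unfolding G'_def using graph_scaleR[OF h(1)] by blast
  next
    fix v a
    assume "(v, a) \<in> G'"
    then show "a \<le> norm v"
      unfolding G'_def using extension_le_norm[OF c] by blast
  qed
  ultimately show ?thesis by blast
qed

lemma total_graph_functional:
  assumes total: "Domain G = UNIV"
  shows "\<exists>\<phi>. bounded_linear \<phi> \<and> onorm \<phi> \<le> 1 \<and> (\<forall>(x, a) \<in> G. \<phi> x = a)"
proof -
  define \<phi> where "\<phi> x = (THE a. (x, a) \<in> G)" for x
  have graph_\<phi>: "(x, \<phi> x) \<in> G" for x
    unfolding \<phi>_def using total graph_unique by (metis Domain_iff UNIV_I theI)
  have \<phi>_eq: "\<phi> x = a" if "(x, a) \<in> G" for x a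
    using graph_unique[OF that graph_\<phi>] by simp
  have \<phi>_add: "\<phi> (x + y) = \<phi> x + \<phi> y" for x y
    using \<phi>_eq[OF graph_add[OF graph_\<phi> graph_\<phi>]] .
  have \<phi>_scaleR: "\<phi> (c *\<^sub>R x) = c *\<^sub>R \<phi> x" for c x
    using \<phi>_eq[OF graph_scaleR[OF graph_\<phi>]] by simp
  have \<phi>_bound: "norm (\<phi> x) \<le> norm x * 1" for x
    using graph_le_norm[OF graph_\<phi>, of x] graph_le_norm[OF graph_\<phi>, of "- x"]
      \<phi>_scaleR[of "-1" x] by auto
  have "bounded_linear \<phi>"
    using \<phi>_add \<phi>_scaleR \<phi>_bound by (intro bounded_linear_intro[where K = 1]) auto
  moreover have "onorm \<phi> \<le> 1"
    using \<phi>_bound by (intro onorm_bound) auto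
  ultimately show ?thesis
    using \<phi>_eq by blast
qed

end

lemma norm_dominated_linear_graph_line:
  "norm_dominated_linear_graph (range (\<lambda>t. (t *\<^sub>R y, t * norm y)))"
proof
  fix x a b
  assume "(x, a) \<in> range (\<lambda>t. (t *\<^sub>R y, t * norm y))" "(x, b) \<in> range (\<lambda>t. (t *\<^sub>R y, t * norm y))"
  then obtain s t where "x = s *\<^sub>R y" "a = s * norm y" "x = t *\<^sub>R y" "b = t * norm y"
    by blast
  then show "a = b" by (cases "y = 0") auto
next
  fix x a w b
  assume "(x, a) \<in> range (\<lambda>t. (t *\<^sub>R y, t * norm y))" "(w, b) \<in> range (\<lambda>t. (t *\<^sub>R y, t * norm y))"
  then obtain s t where "x = s *\<^sub>R y" "a = s * norm y" "w = t *\<^sub>R y" "b = t * norm y"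
    by blast
  then show "(x + w, a + b) \<in> range (\<lambda>t. (t *\<^sub>R y, t * norm y))"
    by (auto intro!: image_eqI[where x = "s + t"] simp: scaleR_add_left distrib_right)
next
  fix x a c
  assume "(x, a) \<in> range (\<lambda>t. (t *\<^sub>R y, t * norm y))"
  then obtain t where "x = t *\<^sub>R y" "a = t * norm y"
    by blast
  then show "(c *\<^sub>R x, c * a) \<in> range (\<lambda>t. (t *\<^sub>R y, t * norm y))"
    by (auto intro!: image_eqI[where x = "c * t"])
next
  fix x a
  assume "(x, a) \<in> range (\<lambda>t. (t *\<^sub>R y, t * norm y))"
  then show "a \<le> norm x"
    by (auto simp: mult_right_mono)
qed

lemma norm_dominated_linear_graph_Union:
  assumes "subset.chain (Collect norm_dominated_linear_graph) C"
  shows "norm_dominated_linear_graph (\<Union>C)"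
proof -
  have graphs: "norm_dominated_linear_graph G" if "G \<in> C" for G
    using assms that unfolding subset_chain_def by blast
  have common: "\<exists>G\<in>C. p \<in> G \<and> q \<in> G" if "p \<in> \<Union>C" "q \<in> \<Union>C" for p q
    using assms that unfolding subset_chain_def by blast
  show ?thesis
  proof
    fix x a b
    assume "(x, a) \<in> \<Union>C" "(x, b) \<in> \<Union>C"
    then show "a = b"
      using common graphs norm_dominated_linear_graph.graph_unique by metis
  next
    fix x a y b
    assume "(x, a) \<in> \<Union>C" "(y, b) \<in> \<Union>C"
    then show "(x + y, a + b) \<in> \<Union>C"
      using common graphs norm_dominated_linear_graph.graph_add by (metis UnionI)
  next
    fix x a c
    assume "(x, a) \<in> \<Union>C"
    then show "(c *\<^sub>R x, c * a) \<in> \<Union>C"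
      using graphs norm_dominated_linear_graph.graph_scaleR by blast
  next
    fix x a
    assume "(x, a) \<in> \<Union>C"
    then show "a \<le> norm x"
      using graphs norm_dominated_linear_graph.graph_le_norm by blast
  qed
qed

lemma norming_functional_exists:
  fixes y :: "'a::real_normed_vector"
  shows "\<exists>\<phi>. bounded_linear \<phi> \<and> onorm \<phi> \<le> 1 \<and> \<phi> y = norm y"
proof -
  define L :: "('a \<times> real) set" where "L = range (\<lambda>t. (t *\<^sub>R y, t * norm y))"
  define \<G> where "\<G> = {G. norm_dominated_linear_graph G \<and> L \<subseteq> G}"
  have "\<exists>M\<in>\<G>. \<forall>G\<in>\<G>. M \<subseteq> G \<longrightarrow> G = M"
  proof (rule subset_Zorn_nonempty)
    have "L \<in> \<G>"
      unfolding \<G>_def L_def using norm_dominated_linear_graph_line by blast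
    then show "\<G> \<noteq> {}" by blast
  next
    fix C
    assume "C \<noteq> {}" and chain: "subset.chain \<G> C"
    then have "subset.chain (Collect norm_dominated_linear_graph) C"
      unfolding subset_chain_def \<G>_def by blast
    moreover have "L \<subseteq> \<Union>C"
    proof -
      obtain G where "G \<in> C" using \<open>C \<noteq> {}\<close> by blast
      moreover have "C \<subseteq> \<G>" using chain by (simp add: subset_chain_def)
      ultimately show ?thesis unfolding \<G>_def by blast
    qed
    ultimately show "\<Union>C \<in> \<G>"
      unfolding \<G>_def by (simp add: norm_dominated_linear_graph_Union)
  qed
  then obtain M where "M \<in> \<G>" and maximal: "\<And>G. G \<in> \<G> \<Longrightarrow> M \<subseteq> G \<Longrightarrow> G = M"
    by blast
  then have M: "norm_dominated_linear_graph M" "L \<subseteq> M"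
    by (simp_all add: \<G>_def)
  interpret M: norm_dominated_linear_graph M by (rule M(1))
  have "(y, norm y) \<in> L"
    unfolding L_def by (intro image_eqI[where x = 1]) simp_all
  with M(2) have y_in_M: "(y, norm y) \<in> M" by blast
  have total: "Domain M = UNIV"
  proof (rule ccontr)
    assume "Domain M \<noteq> UNIV"
    then obtain z where z: "z \<notin> Domain M" by blast
    have "M \<noteq> {}" using y_in_M by blast
    then obtain G where G: "norm_dominated_linear_graph G" "M \<subseteq> G" "z \<in> Domain G"
      using M.extend_one_dimension[OF _ z] by blast
    then have "G \<in> \<G>"
      using M(2) by (auto simp: \<G>_def)
    then have "G = M"
      using maximal G(2) by blast
    then show False
      using G(3) z by simp
  qed
  obtain \<phi> where \<phi>: "bounded_linear \<phi>" "onorm \<phi> \<le> 1" "\<forall>(x, a) \<in> M. \<phi> x = a"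
    using M.total_graph_functional[OF total] by blast
  have "\<phi> y = norm y"
    using \<phi>(3) y_in_M by auto
  with \<phi>(1,2) show ?thesis by blast
qed

lemma sum_abs_le_weak_norm_1:
  assumes "bounded_linear \<phi>" "onorm \<phi> \<le> 1"
  shows "(\<Sum>j = 1..k. \<bar>\<phi> (y j)\<bar>) \<le> weak_norm 1 k y"
proof -
  let ?B = "{\<phi> :: 'a::real_normed_vector \<Rightarrow> real. bounded_linear \<phi> \<and> onorm \<phi> \<le> 1}"
  have sum_eq: "(\<Sum>j = 1..k. \<bar>\<psi> (y j)\<bar> powr 1) powr (1 / 1) = (\<Sum>j = 1..k. \<bar>\<psi> (y j)\<bar>)"
    for \<psi> :: "'a \<Rightarrow> real"
    by (simp add: sum_nonneg)
  have "(\<Sum>j = 1..k. \<bar>\<psi> (y j)\<bar>) \<le> (\<Sum>j = 1..k. norm (y j))" if "\<psi> \<in> ?B" for \<psi>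
  proof (intro sum_mono)
    fix j
    have "\<bar>\<psi> (y j)\<bar> \<le> onorm \<psi> * norm (y j)"
      using onorm[of \<psi> "y j"] that by simp
    also have "\<dots> \<le> norm (y j)"
      using that mult_right_mono[of "onorm \<psi>" 1 "norm (y j)"] by auto
    finally show "\<bar>\<psi> (y j)\<bar> \<le> norm (y j)" .
  qed
  then have "bdd_above ((\<lambda>\<psi>. \<Sum>j = 1..k. \<bar>\<psi> (y j)\<bar>) ` ?B)"
    by (rule bdd_aboveI2)
  then show ?thesis
    unfolding weak_norm_def sum_eq using assms by (auto intro: cSUP_upper)
qed

lemma norm_sum_scaleR_le_weak_norm_1:
  fixes y :: "nat \<Rightarrow> 'a::real_normed_vector"
  assumes c: "\<And>j. \<bar>c j\<bar> \<le> 1"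
  shows "norm (\<Sum>j = 1..k. c j *\<^sub>R y j) \<le> weak_norm 1 k y"
proof -
  obtain \<phi> :: "'a \<Rightarrow> real" where \<phi>: "bounded_linear \<phi>" "onorm \<phi> \<le> 1"
    and norming: "\<phi> (\<Sum>j = 1..k. c j *\<^sub>R y j) = norm (\<Sum>j = 1..k. c j *\<^sub>R y j)"
    using norming_functional_exists by blast
  interpret bounded_linear \<phi> by (rule \<phi>(1))
  have "norm (\<Sum>j = 1..k. c j *\<^sub>R y j) = (\<Sum>j = 1..k. c j * \<phi> (y j))"
    using norming by (simp add: sum scale)
  also have "\<dots> \<le> (\<Sum>j = 1..k. \<bar>\<phi> (y j)\<bar>)"
  proof (intro sum_mono)
    fix j
    have "c j * \<phi> (y j) \<le> \<bar>c j\<bar> * \<bar>\<phi> (y j)\<bar>"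
      by (metis abs_ge_self abs_mult)
    also have "\<dots> \<le> \<bar>\<phi> (y j)\<bar>"
      using c mult_right_mono[of "\<bar>c j\<bar>" 1 "\<bar>\<phi> (y j)\<bar>"] by simp
    finally show "c j * \<phi> (y j) \<le> \<bar>\<phi> (y j)\<bar>" .
  qed
  also have "\<dots> \<le> weak_norm 1 k y"
    using sum_abs_le_weak_norm_1[OF \<phi>] .
  finally show ?thesis .
qed

lemma sqrt_integral_norm_power2_le:
  fixes h :: "real \<Rightarrow> 'a::real_normed_vector"
  assumes bound: "\<And>t. norm (h t) \<le> W"
  shows "sqrt (integral {0..1} (\<lambda>t. (norm (h t))\<^sup>2)) \<le> W"
proof -
  have "0 \<le> W"
    using bound[of 0] norm_ge_zero[of "h 0"] by linarith
  have "integral {0..1} (\<lambda>t. (norm (h t))\<^sup>2) \<le> W\<^sup>2"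
  proof (cases "(\<lambda>t. (norm (h t))\<^sup>2) integrable_on {0..1}")
    case True
    have "integral {0..1} (\<lambda>t. (norm (h t))\<^sup>2) \<le> integral {0..1::real} (\<lambda>t. W\<^sup>2)"
      using True bound by (intro integral_le) (auto intro: power_mono)
    then show ?thesis by simp
  qed (simp add: not_integrable_integral) \<comment> \<open>a non-integrable integrand has integral \<open>0\<close>\<close>
  then have "sqrt (integral {0..1} (\<lambda>t. (norm (h t))\<^sup>2)) \<le> sqrt (W\<^sup>2)"
    by (rule real_sqrt_le_mono)
  then show ?thesis
    using \<open>0 \<le> W\<close> by simp
qed

lemma abs_rademacher_le_1: "\<bar>rademacher j t\<bar> \<le> 1"
  unfolding rademacher_def by (simp add: sgn_real_def)

theorem mainTheorem8:
  fixes f :: "'a::banach \<Rightarrow> 'b::banach" and a :: 'a and p :: real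
  assumes "1 \<le> p"
    and "\<exists>C \<delta> r. C > 0 \<and> \<delta> > 0 \<and> r > 0 \<and>
           (\<forall>k (x :: nat \<Rightarrow> 'a). weak_norm p k x < \<delta> \<longrightarrow>
              weak_norm 1 k (\<lambda>j. f (a + x j) - f a) \<le> C * weak_norm p k x powr r)"
  shows "almost_p_summing_at p f a"
proof -
  obtain C \<delta> r where pos: "C > 0" "\<delta> > 0" "r > 0"
    and weak_bound: "\<And>k (x :: nat \<Rightarrow> 'a). weak_norm p k x < \<delta> \<Longrightarrow>
           weak_norm 1 k (\<lambda>j. f (a + x j) - f a) \<le> C * weak_norm p k x powr r"
    using assms(2) by blast
  have "sqrt (integral {0..1}
          (\<lambda>t. (norm (\<Sum>j = 1..k. rademacher j t *\<^sub>R (f (a + x j) - f a)))\<^sup>2))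
        \<le> C * weak_norm p k x powr r" if "weak_norm p k x < \<delta>" for k and x :: "nat \<Rightarrow> 'a"
  proof -
    have "sqrt (integral {0..1}
            (\<lambda>t. (norm (\<Sum>j = 1..k. rademacher j t *\<^sub>R (f (a + x j) - f a)))\<^sup>2))
          \<le> weak_norm 1 k (\<lambda>j. f (a + x j) - f a)"
      by (intro sqrt_integral_norm_power2_le norm_sum_scaleR_le_weak_norm_1 abs_rademacher_le_1)
    also have "\<dots> \<le> C * weak_norm p k x powr r"
      using weak_bound[OF that] .
    finally show ?thesis .
  qed
  then show ?thesis
    unfolding almost_p_summing_at_def using pos by blast
qed

end
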